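(* If (A.4) holds, then for any fixed $\zeta\in(0,1)$, \[ |F_\omega(x^\star_{\omega,\tau})-F_\omega(x^\star_\omega)|=\mathcal{O}(\tau^{1-\zeta}). \]
   Context: Let $\Omega=(t_0,t_E)$ bounded, $|\Omega|=t_E-t_0$, $t_1,\dots,t_M\in[t_0,t_E]$; $\mathcal{X}=(H^1(\Omega))^{n_y}\times(L^2(\Omega))^{n_z}$ with product inner product and norm $\|\cdot\|_{\mathcal{X}}$, $x=(y,z)$. For $f,c,b$: $F(x)=\int_\Omega f(\dot y,y,z,t)dt$, $r(x)=\int_\Omega\|c(\dot y,y,z,t)\|_2^2dt+\|b(y(t_1),\dots,y(t_M))\|_2^2$, $\Gamma(x)=-\sum_{j=1}^{n_z}\int_\Omega\log z_j(t)dt$. DOP: minimize $F$ subject to $b(\dots)=0$, $c=0$, $z\ge0$ a.e., with global minimizer $x^\star$. For $\omega\in(0,1)$: $F_\omega=F+\frac1{2\omega}r$ and $x^\star_\omega$ minimizes $F_\omega$ over $\{z\ge0\text{ a.e.}\}$. For $\tau\in(0,\omega]$: $F_{\omega,\tau}=F_\omega+\tau\Gamma$ and $x^\star_{\omega,\tau}$ minimizes $F_{\omega,\tau}$ over $\mathcal{X}$. Standing assumptions: (A.2) $\|c(\dot y(t),y(t),z(t),t)\|_1$ and $\|b(\dots)\|_1$ bounded for all $x$ with $z\ge0$, $t\in\Omega$; $F$ bounded below on $\{z\ge0\}$. (A.3) $f,c,b$ globally Lipschitz in all arguments except $t$. (A.4) $x^\star_\omega$ and $x^\star_{\omega,\tau}$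 are bounded in $\|z\|_{L^\infty(\Omega)}$ and $\|x\|_{\mathcal{X}}$, and $\|x^\star\|_{\mathcal{X}}$ is bounded. The $\mathcal{O}$ is as $\tau\to0$. *)

theory Defs
  imports "HOL-Analysis.Analysis" "HOL-Library.Landau_Symbols"
begin

abbreviation Om :: "real \<Rightarrow> real \<Rightarrow> real measure" where
  "Om t0 tE \<equiv> lebesgue_on {t0<..<tE}"

definition L2 :: "real \<Rightarrow> real \<Rightarrow> (real \<Rightarrow> 'a::euclidean_space) \<Rightarrow> bool" where
  "L2 t0 tE u \<longleftrightarrow> u \<in> borel_measurable (Om t0 tE) \<and>
     integrable (Om t0 tE) (\<lambda>t. (norm (u t))\<^sup>2)"

text \<open>dy is a (square integrable) weak derivative of y; y is the continuous representative.\<close>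
definition weak_deriv :: "real \<Rightarrow> real \<Rightarrow> (real \<Rightarrow> 'a::euclidean_space) \<Rightarrow> (real \<Rightarrow> 'a) \<Rightarrow> bool" where
  "weak_deriv t0 tE y dy \<longleftrightarrow> L2 t0 tE dy \<and>
     (\<forall>t\<in>{t0..tE}. y t = y t0 + integral\<^sup>L (lebesgue_on {t0..t}) dy)"

definition H1 :: "real \<Rightarrow> real \<Rightarrow> (real \<Rightarrow> 'a::euclidean_space) \<Rightarrow> bool" where
  "H1 t0 tE y \<longleftrightarrow> (\<exists>dy. weak_deriv t0 tE y dy)"

text \<open>The (a.e. unique) weak derivative \<open>y'\<close>.\<close>
definition wdot :: "real \<Rightarrow> real \<Rightarrow> (real \<Rightarrow> 'a::euclidean_space) \<Rightarrow> (real \<Rightarrow> 'a)" where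
  "wdot t0 tE y = (SOME dy. weak_deriv t0 tE y dy)"

definition Xsp :: "real \<Rightarrow> real \<Rightarrow> ((real \<Rightarrow> 'y::euclidean_space) \<times> (real \<Rightarrow> 'z::euclidean_space)) set" where
  "Xsp t0 tE = {(y, z). H1 t0 tE y \<and> L2 t0 tE z}"

definition normX :: "real \<Rightarrow> real \<Rightarrow> (real \<Rightarrow> 'y::euclidean_space) \<times> (real \<Rightarrow> 'z::euclidean_space) \<Rightarrow> real" where
  "normX t0 tE x = (case x of (y, z) \<Rightarrow>
     sqrt (integral\<^sup>L (Om t0 tE) (\<lambda>t. (norm (y t))\<^sup>2)
         + integral\<^sup>L (Om t0 tE) (\<lambda>t. (norm (wdot t0 tE y t))\<^sup>2)
         + integral\<^sup>L (Om t0 tE) (\<lambda>t. (norm (z t))\<^sup>2)))"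

definition znonneg :: "real \<Rightarrow> real \<Rightarrow> (real \<Rightarrow> 'z::euclidean_space) \<Rightarrow> bool" where
  "znonneg t0 tE z \<longleftrightarrow> (AE t in Om t0 tE. \<forall>j\<in>Basis. 0 \<le> z t \<bullet> j)"

definition norm1 :: "'a::euclidean_space \<Rightarrow> real" where
  "norm1 v = (\<Sum>j\<in>Basis. \<bar>v \<bullet> j\<bar>)"

definition Fobj :: "real \<Rightarrow> real \<Rightarrow> ('y::euclidean_space \<Rightarrow> 'y \<Rightarrow> 'z::euclidean_space \<Rightarrow> real \<Rightarrow> real)
   \<Rightarrow> (real \<Rightarrow> 'y) \<times> (real \<Rightarrow> 'z) \<Rightarrow> real" where
  "Fobj t0 tE f x = (case x of (y, z) \<Rightarrow>
     integral\<^sup>L (Om t0 tE) (\<lambda>t. f (wdot t0 tE y t) (y t) (z t) t))"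

definition rpen :: "real \<Rightarrow> real \<Rightarrow> ('y::euclidean_space \<Rightarrow> 'y \<Rightarrow> 'z::euclidean_space \<Rightarrow> real \<Rightarrow> 'c::euclidean_space)
   \<Rightarrow> ('y list \<Rightarrow> 'b::euclidean_space) \<Rightarrow> real list
   \<Rightarrow> (real \<Rightarrow> 'y) \<times> (real \<Rightarrow> 'z) \<Rightarrow> real" where
  "rpen t0 tE c b tps x = (case x of (y, z) \<Rightarrow>
     integral\<^sup>L (Om t0 tE) (\<lambda>t. (norm (c (wdot t0 tE y t) (y t) (z t) t))\<^sup>2)
     + (norm (b (map y tps)))\<^sup>2)"

definition Gamma :: "real \<Rightarrow> real \<Rightarrow> (real \<Rightarrow> 'y) \<times> (real \<Rightarrow> 'z::euclidean_space) \<Rightarrow> ereal" where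
  "Gamma t0 tE x = (case x of (y, z) \<Rightarrow>
     (if (\<forall>j\<in>Basis. (AE t in Om t0 tE. 0 < z t \<bullet> j) \<and> integrable (Om t0 tE) (\<lambda>t. ln (z t \<bullet> j)))
      then ereal (- (\<Sum>j\<in>Basis. integral\<^sup>L (Om t0 tE) (\<lambda>t. ln (z t \<bullet> j))))
      else \<infinity>))"

definition Fw :: "real \<Rightarrow> real \<Rightarrow> ('y::euclidean_space \<Rightarrow> 'y \<Rightarrow> 'z::euclidean_space \<Rightarrow> real \<Rightarrow> real)
   \<Rightarrow> ('y \<Rightarrow> 'y \<Rightarrow> 'z \<Rightarrow> real \<Rightarrow> 'c::euclidean_space)
   \<Rightarrow> ('y list \<Rightarrow> 'b::euclidean_space) \<Rightarrow> real list \<Rightarrow> real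
   \<Rightarrow> (real \<Rightarrow> 'y) \<times> (real \<Rightarrow> 'z) \<Rightarrow> real" where
  "Fw t0 tE f c b tps \<omega> x = Fobj t0 tE f x + rpen t0 tE c b tps x / (2 * \<omega>)"

definition Fwt :: "real \<Rightarrow> real \<Rightarrow> ('y::euclidean_space \<Rightarrow> 'y \<Rightarrow> 'z::euclidean_space \<Rightarrow> real \<Rightarrow> real)
   \<Rightarrow> ('y \<Rightarrow> 'y \<Rightarrow> 'z \<Rightarrow> real \<Rightarrow> 'c::euclidean_space)
   \<Rightarrow> ('y list \<Rightarrow> 'b::euclidean_space) \<Rightarrow> real list \<Rightarrow> real \<Rightarrow> real
   \<Rightarrow> (real \<Rightarrow> 'y) \<times> (real \<Rightarrow> 'z) \<Rightarrow> ereal" where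
  "Fwt t0 tE f c b tps \<omega> \<tau> x = ereal (Fw t0 tE f c b tps \<omega> x) + ereal \<tau> * Gamma t0 tE x"

end

theory Submission
  imports Defs "HOL-Real_Asymp.Real_Asymp"
begin

(*
  Compare the barrier minimizer x_{w,tau} with the competitor obtained from x_w by raising every
  component of its z-part by tau. As f and c are Lipschitz and c is bounded, this raises F_w by
  O(tau), while z >= tau gives Gamma <= -n_z |Omega| ln tau for the competitor. Conversely, a
  finite barrier forces the z-part of x_{w,tau} to be positive, so x_{w,tau} is admissible for F_w
  and F_w(x_w) <= F_w(x_{w,tau}); the L^infinity bound of (A.4) gives
  Gamma(x_{w,tau}) >= -n_z C |Omega|. Minimality of x_{w,tau} for F_w + tau Gamma then yields
  0 <= F_w(x_{w,tau}) - F_w(x_w) <= K tau - n_z |Omega| tau ln tau,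
  and tau ln tau = O(tau^(1-zeta)).
  Only the L^infinity bounds of (A.4) enter.
*)

lemma barrier_minimizer_gap:
  fixes F :: "'x \<Rightarrow> real" and G :: "'x \<Rightarrow> ereal"
  assumes "0 < \<tau>"
    and min_S: "\<forall>x\<in>S. F xS \<le> F x"
    and min_X: "\<forall>x\<in>X. ereal (F xt) + ereal \<tau> * G xt \<le> ereal (F x) + ereal \<tau> * G x"
    and xe: "xe \<in> X" "F xe \<le> F xS + \<delta>" "G xe \<le> ereal g"
    and finite_in_S: "G xt \<noteq> \<infinity> \<Longrightarrow> xt \<in> S"
    and finite_lower: "G xt \<noteq> \<infinity> \<Longrightarrow> ereal h \<le> G xt"
  shows "\<bar>F xt - F xS\<bar> \<le> \<delta> + \<tau> * (g - h)"
proof -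
  have "ereal \<tau> * G xe \<le> ereal (\<tau> * g)"
    using ereal_mult_left_mono[OF xe(3), of "ereal \<tau>"] assms(1) by simp
  then have bound: "ereal (F xt) + ereal \<tau> * G xt \<le> ereal (F xe + \<tau> * g)"
    using min_X xe(1) by (metis add_left_mono order_trans plus_ereal.simps(1))
  have "G xt \<noteq> \<infinity>"
  proof
    assume "G xt = \<infinity>"
    then show False
      using bound assms(1) by simp
  qed
  then obtain gt where gt: "G xt = ereal gt" "h \<le> gt"
    using finite_lower by (cases "G xt") auto
  have "F xt + \<tau> * gt \<le> F xe + \<tau> * g"
    using bound gt(1) by simp
  moreover have "\<tau> * h \<le> \<tau> * gt"
    using gt(2) assms(1) by simp
  moreover have "F xS \<le> F xt"
    using min_S finite_in_S \<open>G xt \<noteq> \<infinity>\<close> by blast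
  ultimately show ?thesis
    using xe(2) by (simp add: right_diff_distrib)
qed

lemma power2_norm_diff_le:
  fixes a b :: "'a::real_normed_vector"
  assumes "norm a \<le> B" "norm b \<le> B"
  shows "(norm a)\<^sup>2 - (norm b)\<^sup>2 \<le> 2 * B * norm (a - b)"
proof -
  have "(norm a)\<^sup>2 - (norm b)\<^sup>2 = (norm a - norm b) * (norm a + norm b)"
    by (simp add: power2_eq_square algebra_simps)
  also have "\<dots> \<le> norm (a - b) * (2 * B)"
    using assms norm_triangle_ineq2[of a b] by (intro mult_mono) auto
  finally show ?thesis by (simp add: mult.commute)
qed

lemma lipschitz_in_third_arg:
  fixes g :: "'v::real_normed_vector \<Rightarrow> 'w::real_normed_vector \<Rightarrow> 'u::real_normed_vector
    \<Rightarrow> real \<Rightarrow> 'a::real_normed_vector"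
  assumes "\<forall>t\<in>T. \<forall>v v' w w' u u'.
      norm (g v w u t - g v' w' u' t) \<le> L * (norm (v - v') + norm (w - w') + norm (u - u'))"
  shows "\<forall>t\<in>T. \<forall>v w u u'. norm (g v w u' t - g v w u t) \<le> L * norm (u' - u)"
proof (intro ballI allI)
  fix t v w u u'
  assume "t \<in> T"
  then show "norm (g v w u' t - g v w u t) \<le> L * norm (u' - u)"
    using assms by (metis add_0 diff_self norm_zero)
qed

lemma finite_measure_Om: "finite_measure (Om t0 tE)"
  by (simp add: finite_measure_lebesgue_on)

lemma integrable_const_Om: "integrable (Om t0 tE) (\<lambda>_. k)"
  by (rule finite_measure.integrable_const[OF finite_measure_Om])

lemma measure_Om: "t0 \<le> tE \<Longrightarrow> measure (Om t0 tE) {t0<..<tE} = tE - t0"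
  by (simp add: measure_restrict_space)

lemma integral_Om_le_const:
  assumes "t0 \<le> tE" "integrable (Om t0 tE) g" "AE t in Om t0 tE. g t \<le> k"
  shows "integral\<^sup>L (Om t0 tE) g \<le> k * (tE - t0)"
proof -
  have "integral\<^sup>L (Om t0 tE) g \<le> integral\<^sup>L (Om t0 tE) (\<lambda>_. k)"
    by (intro integral_mono_AE assms(2,3) integrable_const_Om)
  with assms(1) show ?thesis by (simp add: measure_Om mult.commute)
qed

lemma integral_Om_ge_const:
  assumes "t0 \<le> tE" "integrable (Om t0 tE) g" "AE t in Om t0 tE. k \<le> g t"
  shows "k * (tE - t0) \<le> integral\<^sup>L (Om t0 tE) g"
proof -
  have "integral\<^sup>L (Om t0 tE) (\<lambda>_. k) \<le> integral\<^sup>L (Om t0 tE) g"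
    by (intro integral_mono_AE assms(2,3) integrable_const_Om)
  with assms(1) show ?thesis by (simp add: measure_Om mult.commute)
qed

lemma L2_add_const:
  assumes "L2 t0 tE z"
  shows "L2 t0 tE (\<lambda>t. z t + a)"
proof -
  have "z \<in> borel_measurable (Om t0 tE)"
    using assms by (simp add: L2_def)
  then have meas: "(\<lambda>t. z t + a) \<in> borel_measurable (Om t0 tE)"
    by measurable
  have dom: "integrable (Om t0 tE) (\<lambda>t. 2 * (norm (z t))\<^sup>2 + 2 * (norm a)\<^sup>2)"
    using assms
    by (intro Bochner_Integration.integrable_add integrable_mult_right integrable_const_Om)
      (simp add: L2_def)
  have bound: "(norm (z t + a))\<^sup>2 \<le> 2 * (norm (z t))\<^sup>2 + 2 * (norm a)\<^sup>2" for t
  proof -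
    have "(norm (z t + a))\<^sup>2 \<le> (norm (z t) + norm a)\<^sup>2"
      by (simp add: norm_triangle_ineq power_mono)
    also have "\<dots> \<le> 2 * (norm (z t))\<^sup>2 + 2 * (norm a)\<^sup>2"
      using sum_squares_bound[of "norm (z t)" "norm a"] by (simp add: power2_sum)
    finally show ?thesis .
  qed
  have "integrable (Om t0 tE) (\<lambda>t. (norm (z t + a))\<^sup>2)"
  proof (rule Bochner_Integration.integrable_bound[OF dom])
    show "(\<lambda>t. (norm (z t + a))\<^sup>2) \<in> borel_measurable (Om t0 tE)"
      using meas by measurable
  qed (use bound in simp)
  with meas show ?thesis by (simp add: L2_def)
qed

definition shift_z ::
    "real \<Rightarrow> (real \<Rightarrow> 'y) \<times> (real \<Rightarrow> 'z::euclidean_space) \<Rightarrow> (real \<Rightarrow> 'y) \<times> (real \<Rightarrow> 'z)"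
  where
  "shift_z e x = (fst x, \<lambda>t. snd x t + e *\<^sub>R One)"

lemma shift_z_in_Xsp: "x \<in> Xsp t0 tE \<Longrightarrow> shift_z e x \<in> Xsp t0 tE"
  by (auto simp: shift_z_def Xsp_def L2_add_const)

lemma znonneg_shift_z:
  assumes "znonneg t0 tE (snd x)" "0 \<le> e"
  shows "znonneg t0 tE (snd (shift_z e x))"
  using assms(1) unfolding znonneg_def shift_z_def
  by eventually_elim (use assms(2) in \<open>simp add: inner_add_left inner_sum_Basis\<close>)

lemma Gamma_finite_imp_znonneg:
  assumes "Gamma t0 tE x \<noteq> \<infinity>"
  shows "znonneg t0 tE (snd x)"
proof -
  obtain y z where x: "x = (y, z)" by (cases x)
  have "\<forall>j\<in>Basis. AE t in Om t0 tE. 0 < z t \<bullet> j"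
    using assms by (auto simp: x Gamma_def split: if_splits)
  then have "AE t in Om t0 tE. \<forall>j\<in>Basis. 0 < z t \<bullet> j"
    by (simp add: eventually_ball_finite_distrib)
  then show ?thesis
    unfolding x znonneg_def by eventually_elim (auto intro: less_imp_le)
qed

lemma Gamma_lower_bound:
  fixes x :: "(real \<Rightarrow> 'y) \<times> (real \<Rightarrow> 'z::euclidean_space)"
  assumes "t0 \<le> tE" "Gamma t0 tE x \<noteq> \<infinity>" "AE t in Om t0 tE. norm (snd x t) \<le> C"
  shows "ereal (- real DIM('z) * C * (tE - t0)) \<le> Gamma t0 tE x"
proof -
  obtain y z where x: "x = (y, z)" by (cases x)
  have barrier_finite: "\<forall>j\<in>Basis.
      (AE t in Om t0 tE. 0 < z t \<bullet> j) \<and> integrable (Om t0 tE) (\<lambda>t. ln (z t \<bullet> j))"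
    using assms(2) by (auto simp: x Gamma_def split: if_splits)
  have "integral\<^sup>L (Om t0 tE) (\<lambda>t. ln (z t \<bullet> j)) \<le> C * (tE - t0)" if j: "j \<in> Basis" for j
  proof (rule integral_Om_le_const[OF assms(1)])
    show "integrable (Om t0 tE) (\<lambda>t. ln (z t \<bullet> j))"
      using barrier_finite j by blast
    have "AE t in Om t0 tE. 0 < z t \<bullet> j"
      using barrier_finite j by blast
    then show "AE t in Om t0 tE. ln (z t \<bullet> j) \<le> C"
      using assms(3)
    proof eventually_elim
      case (elim t)
      have "ln (z t \<bullet> j) < z t \<bullet> j"
        using elim by simp
      also have "\<dots> \<le> norm (z t)"
        using Basis_le_norm[OF j] by (rule order_trans[OF abs_ge_self])
      finally show ?case
        using elim by (simp add: x)
    qed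
  qed
  then have "(\<Sum>j\<in>Basis. integral\<^sup>L (Om t0 tE) (\<lambda>t. ln (z t \<bullet> j))) \<le> real DIM('z) * (C * (tE - t0))"
    using sum_mono[of "Basis::'z set" _ "\<lambda>_. C * (tE - t0)"] by simp
  then show ?thesis
    using barrier_finite by (simp add: x Gamma_def)
qed

lemma Gamma_shift_z_le:
  fixes x :: "(real \<Rightarrow> 'y::euclidean_space) \<times> (real \<Rightarrow> 'z::euclidean_space)"
  assumes "t0 \<le> tE" "x \<in> Xsp t0 tE" "znonneg t0 tE (snd x)"
    and "AE t in Om t0 tE. norm (snd x t) \<le> C" "0 < e"
  shows "Gamma t0 tE (shift_z e x) \<le> ereal (- real DIM('z) * ln e * (tE - t0))"
proof -
  obtain y z where x: "x = (y, z)" by (cases x)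
  have shifted_comp: "(z t + e *\<^sub>R One) \<bullet> j = z t \<bullet> j + e" if "j \<in> Basis" for t j
    using that by (simp add: inner_add_left inner_sum_Basis)
  have meas: "z \<in> borel_measurable (Om t0 tE)"
    using assms(2) by (simp add: x Xsp_def L2_def)
  have nonneg: "AE t in Om t0 tE. \<forall>j\<in>Basis. 0 \<le> z t \<bullet> j"
    using assms(3) by (simp add: x znonneg_def)
  have pos: "AE t in Om t0 tE. 0 < (z t + e *\<^sub>R One) \<bullet> j"
    and lower: "AE t in Om t0 tE. ln e \<le> ln ((z t + e *\<^sub>R One) \<bullet> j)"
    if j: "j \<in> Basis" for j
    using nonneg by (eventually_elim, use j assms(5) shifted_comp in force)+
  have int: "integrable (Om t0 tE) (\<lambda>t. ln ((z t + e *\<^sub>R One) \<bullet> j))" if j: "j \<in> Basis" for j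
  proof (rule finite_measure.integrable_const_bound[OF finite_measure_Om])
    show "(\<lambda>t. ln ((z t + e *\<^sub>R One) \<bullet> j)) \<in> borel_measurable (Om t0 tE)"
      using meas by measurable
    show "AE t in Om t0 tE. norm (ln ((z t + e *\<^sub>R One) \<bullet> j)) \<le> \<bar>ln e\<bar> + \<bar>C\<bar> + e"
      using lower[OF j] pos[OF j] assms(4)
    proof eventually_elim
      case (elim t)
      have "ln ((z t + e *\<^sub>R One) \<bullet> j) < z t \<bullet> j + e"
        using elim shifted_comp[OF j] by simp
      moreover have "z t \<bullet> j \<le> \<bar>C\<bar>"
        using Basis_le_norm[OF j, of "z t"] elim by (simp add: x)
      ultimately show ?case
        using elim(1) assms(5) abs_ge_self[of C] abs_ge_minus_self[of "ln e"]
        unfolding real_norm_def abs_le_iff by linarith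
    qed
  qed
  have "ln e * (tE - t0) \<le> integral\<^sup>L (Om t0 tE) (\<lambda>t. ln ((z t + e *\<^sub>R One) \<bullet> j))"
    if "j \<in> Basis" for j
    using assms(1) int[OF that] lower[OF that] by (rule integral_Om_ge_const)
  then have "real DIM('z) * (ln e * (tE - t0))
      \<le> (\<Sum>j\<in>Basis. integral\<^sup>L (Om t0 tE) (\<lambda>t. ln ((z t + e *\<^sub>R One) \<bullet> j)))"
    using sum_mono[of "Basis::'z set" "\<lambda>_. ln e * (tE - t0)"] by simp
  then show ?thesis
    using pos int by (simp add: x shift_z_def Gamma_def)
qed

lemma Fobj_add_const_le:
  assumes "t0 \<le> tE"
    and "integrable (Om t0 tE) (\<lambda>t. f (wdot t0 tE y t) (y t) (z t) t)"
    and "integrable (Om t0 tE) (\<lambda>t. f (wdot t0 tE y t) (y t) (z t + a) t)"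
    and lip: "\<forall>t\<in>{t0<..<tE}. \<forall>v w u u'. \<bar>f v w u' t - f v w u t\<bar> \<le> L * norm (u' - u)"
  shows "Fobj t0 tE f (y, \<lambda>t. z t + a) - Fobj t0 tE f (y, z) \<le> L * norm a * (tE - t0)"
proof -
  let ?f = "\<lambda>u t. f (wdot t0 tE y t) (y t) u t"
  have "Fobj t0 tE f (y, \<lambda>t. z t + a) - Fobj t0 tE f (y, z)
      = integral\<^sup>L (Om t0 tE) (\<lambda>t. ?f (z t + a) t - ?f (z t) t)"
    using assms(2,3) by (simp add: Fobj_def)
  also have "\<dots> \<le> L * norm a * (tE - t0)"
  proof (rule integral_Om_le_const[OF assms(1)])
    have "?f (z t + a) t - ?f (z t) t \<le> L * norm a" if "t \<in> {t0<..<tE}" for t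
      using abs_le_D1[OF lip[rule_format, OF that, of _ _ "z t + a" "z t"]] by simp
    then show "AE t in Om t0 tE. ?f (z t + a) t - ?f (z t) t \<le> L * norm a"
      by (intro AE_I2) simp
  qed (use assms(2,3) in simp)
  finally show ?thesis .
qed

lemma rpen_add_const_le:
  assumes "t0 \<le> tE"
    and "integrable (Om t0 tE) (\<lambda>t. (norm (c (wdot t0 tE y t) (y t) (z t) t))\<^sup>2)"
    and "integrable (Om t0 tE) (\<lambda>t. (norm (c (wdot t0 tE y t) (y t) (z t + a) t))\<^sup>2)"
    and "AE t in Om t0 tE. norm (c (wdot t0 tE y t) (y t) (z t) t) \<le> B"
    and "AE t in Om t0 tE. norm (c (wdot t0 tE y t) (y t) (z t + a) t) \<le> B"
    and lip: "\<forall>t\<in>{t0<..<tE}. \<forall>v w u u'. norm (c v w u' t - c v w u t) \<le> L * norm (u' - u)"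
  shows "rpen t0 tE c b tps (y, \<lambda>t. z t + a) - rpen t0 tE c b tps (y, z)
    \<le> 2 * B * L * norm a * (tE - t0)"
proof -
  let ?c = "\<lambda>u t. c (wdot t0 tE y t) (y t) u t"
  have "rpen t0 tE c b tps (y, \<lambda>t. z t + a) - rpen t0 tE c b tps (y, z)
      = integral\<^sup>L (Om t0 tE) (\<lambda>t. (norm (?c (z t + a) t))\<^sup>2 - (norm (?c (z t) t))\<^sup>2)"
    using assms(2,3) by (simp add: rpen_def)
  also have "\<dots> \<le> 2 * B * L * norm a * (tE - t0)"
  proof (rule integral_Om_le_const[OF assms(1)])
    show "integrable (Om t0 tE) (\<lambda>t. (norm (?c (z t + a) t))\<^sup>2 - (norm (?c (z t) t))\<^sup>2)"
      using assms(2,3) by simp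
    have "AE t in Om t0 tE. t \<in> {t0<..<tE}"
      by (rule AE_I2) simp
    then show "AE t in Om t0 tE.
        (norm (?c (z t + a) t))\<^sup>2 - (norm (?c (z t) t))\<^sup>2 \<le> 2 * B * L * norm a"
      using assms(4,5)
    proof eventually_elim
      case (elim t)
      have "(norm (?c (z t + a) t))\<^sup>2 - (norm (?c (z t) t))\<^sup>2
          \<le> 2 * B * norm (?c (z t + a) t - ?c (z t) t)"
        using elim by (intro power2_norm_diff_le)
      also have "\<dots> \<le> 2 * B * (L * norm a)"
        using lip[rule_format, OF elim(1), of _ _ "z t + a" "z t"]
          order_trans[OF norm_ge_zero elim(2)]
        by (intro mult_left_mono) auto
      finally show ?case by (simp add: mult.assoc)
    qed
  qed
  finally show ?thesis .
qed

lemma Fw_shift_z_le: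
  fixes f :: "'y::euclidean_space \<Rightarrow> 'y \<Rightarrow> 'z::euclidean_space \<Rightarrow> real \<Rightarrow> real"
    and c :: "'y \<Rightarrow> 'y \<Rightarrow> 'z \<Rightarrow> real \<Rightarrow> 'c::euclidean_space"
  assumes "t0 \<le> tE" "0 < \<omega>" "0 \<le> e" "x \<in> Xsp t0 tE" "znonneg t0 tE (snd x)"
    and well_def: "\<forall>(y, z)\<in>Xsp t0 tE.
        integrable (Om t0 tE) (\<lambda>t. f (wdot t0 tE y t) (y t) (z t) t) \<and>
        integrable (Om t0 tE) (\<lambda>t. (norm (c (wdot t0 tE y t) (y t) (z t) t))\<^sup>2)"
    and c_bound: "\<forall>(y, z)\<in>Xsp t0 tE. znonneg t0 tE z \<longrightarrow>
        (AE t in Om t0 tE. norm (c (wdot t0 tE y t) (y t) (z t) t) \<le> B)"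
    and f_lip: "\<forall>t\<in>{t0<..<tE}. \<forall>v w u u'. \<bar>f v w u' t - f v w u t\<bar> \<le> Lf * norm (u' - u)"
    and c_lip: "\<forall>t\<in>{t0<..<tE}. \<forall>v w u u'. norm (c v w u' t - c v w u t) \<le> Lc * norm (u' - u)"
  shows "Fw t0 tE f c b tps \<omega> (shift_z e x)
    \<le> Fw t0 tE f c b tps \<omega> x + e * ((Lf + B * Lc / \<omega>) * norm (One::'z) * (tE - t0))"
proof -
  obtain y z where x: "x = (y, z)" by (cases x)
  let ?z = "\<lambda>t. z t + e *\<^sub>R One"
  have shifted: "(y, ?z) \<in> Xsp t0 tE" "znonneg t0 tE ?z"
    using shift_z_in_Xsp[OF assms(4)] znonneg_shift_z[OF assms(5,3)]
    by (simp_all add: x shift_z_def)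
  have "Fobj t0 tE f (y, ?z) - Fobj t0 tE f (y, z) \<le> Lf * norm (e *\<^sub>R One :: 'z) * (tE - t0)"
    using assms(1) _ _ f_lip by (rule Fobj_add_const_le) (use well_def shifted assms(4) x in auto)
  then have F: "Fobj t0 tE f (y, ?z) - Fobj t0 tE f (y, z) \<le> e * Lf * norm (One::'z) * (tE - t0)"
    using assms(3) by (simp add: mult_ac)
  have "rpen t0 tE c b tps (y, ?z) - rpen t0 tE c b tps (y, z)
      \<le> 2 * B * Lc * norm (e *\<^sub>R One :: 'z) * (tE - t0)"
    using assms(1) _ _ _ _ c_lip
    by (rule rpen_add_const_le) (use well_def c_bound shifted assms(4,5) x in auto)
  then have "(rpen t0 tE c b tps (y, ?z) - rpen t0 tE c b tps (y, z)) / (2 * \<omega>)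
      \<le> 2 * B * Lc * norm (e *\<^sub>R One :: 'z) * (tE - t0) / (2 * \<omega>)"
    using assms(2) by (intro divide_right_mono) auto
  also have "\<dots> = e * (B * Lc / \<omega>) * norm (One::'z) * (tE - t0)"
    using assms(3) by simp
  finally have R: "rpen t0 tE c b tps (y, ?z) / (2 * \<omega>) - rpen t0 tE c b tps (y, z) / (2 * \<omega>)
      \<le> e * (B * Lc / \<omega>) * norm (One::'z) * (tE - t0)"
    by (simp add: diff_divide_distrib)
  show ?thesis
    using F R by (simp add: x shift_z_def Fw_def algebra_simps)
qed

lemma norm_c_AE_le:
  assumes bound: "\<forall>(y, z)\<in>Xsp t0 tE. znonneg t0 tE z \<longrightarrow>
        (\<forall>dy. weak_deriv t0 tE y dy \<longrightarrow> (\<forall>t\<in>{t0<..<tE}. (\<forall>j\<in>Basis. 0 \<le> z t \<bullet> j) \<longrightarrow>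
             norm1 (c (dy t) (y t) (z t) t) \<le> B))"
    and "(y, z) \<in> Xsp t0 tE" "znonneg t0 tE z"
  shows "AE t in Om t0 tE. norm (c (wdot t0 tE y t) (y t) (z t) t) \<le> B"
proof -
  have "weak_deriv t0 tE y (wdot t0 tE y)"
    using assms(2) unfolding Xsp_def H1_def wdot_def
    by (auto intro: someI[where P = "weak_deriv t0 tE y"])
  then have pointwise: "\<forall>t\<in>{t0<..<tE}. (\<forall>j\<in>Basis. 0 \<le> z t \<bullet> j) \<longrightarrow>
      norm1 (c (wdot t0 tE y t) (y t) (z t) t) \<le> B"
    using bound assms(2,3) by blast
  have "AE t in Om t0 tE. t \<in> {t0<..<tE}"
    by (rule AE_I2) simp
  with assms(3) show ?thesis
    unfolding znonneg_def
  proof eventually_elim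
    case (elim t)
    then show ?case
      using pointwise norm_le_l1[of "c (wdot t0 tE y t) (y t) (z t) t"]
      unfolding norm1_def by fastforce
  qed
qed

lemma Fw_barrier_gap_le:
  fixes f :: "'y::euclidean_space \<Rightarrow> 'y \<Rightarrow> 'z::euclidean_space \<Rightarrow> real \<Rightarrow> real"
    and c :: "'y \<Rightarrow> 'y \<Rightarrow> 'z \<Rightarrow> real \<Rightarrow> 'c::euclidean_space"
    and b :: "'y list \<Rightarrow> 'b::euclidean_space"
  assumes "t0 \<le> tE" "0 < \<omega>" "0 < \<tau>"
    and well_def: "\<forall>(y, z)\<in>Xsp t0 tE.
        integrable (Om t0 tE) (\<lambda>t. f (wdot t0 tE y t) (y t) (z t) t) \<and>
        integrable (Om t0 tE) (\<lambda>t. (norm (c (wdot t0 tE y t) (y t) (z t) t))\<^sup>2)"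
    and c_bound: "\<forall>(y, z)\<in>Xsp t0 tE. znonneg t0 tE z \<longrightarrow>
        (AE t in Om t0 tE. norm (c (wdot t0 tE y t) (y t) (z t) t) \<le> B)"
    and f_lip: "\<forall>t\<in>{t0<..<tE}. \<forall>v w u u'. \<bar>f v w u' t - f v w u t\<bar> \<le> Lf * norm (u' - u)"
    and c_lip: "\<forall>t\<in>{t0<..<tE}. \<forall>v w u u'. norm (c v w u' t - c v w u t) \<le> Lc * norm (u' - u)"
    and xw: "xw \<in> Xsp t0 tE" "znonneg t0 tE (snd xw)" "AE t in Om t0 tE. norm (snd xw t) \<le> Cw"
    and xw_min: "\<forall>(y, z)\<in>Xsp t0 tE. znonneg t0 tE z \<longrightarrow>
        Fw t0 tE f c b tps \<omega> xw \<le> Fw t0 tE f c b tps \<omega> (y, z)"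
    and xt: "xt \<in> Xsp t0 tE" "AE t in Om t0 tE. norm (snd xt t) \<le> Ct"
    and xt_min: "\<forall>x\<in>Xsp t0 tE. Fwt t0 tE f c b tps \<omega> \<tau> xt \<le> Fwt t0 tE f c b tps \<omega> \<tau> x"
  shows "\<bar>Fw t0 tE f c b tps \<omega> xt - Fw t0 tE f c b tps \<omega> xw\<bar>
    \<le> ((Lf + B * Lc / \<omega>) * norm (One::'z) + real DIM('z) * Ct) * (tE - t0) * \<tau>
       - real DIM('z) * (tE - t0) * (\<tau> * ln \<tau>)"
proof -
  have "\<bar>Fw t0 tE f c b tps \<omega> xt - Fw t0 tE f c b tps \<omega> xw\<bar>
    \<le> \<tau> * ((Lf + B * Lc / \<omega>) * norm (One::'z) * (tE - t0))
       + \<tau> * (- real DIM('z) * ln \<tau> * (tE - t0) - (- real DIM('z) * Ct * (tE - t0)))"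
  proof (rule barrier_minimizer_gap[where S = "{x \<in> Xsp t0 tE. znonneg t0 tE (snd x)}"
        and X = "Xsp t0 tE" and G = "Gamma t0 tE" and xe = "shift_z \<tau> xw"])
    show "\<forall>x\<in>{x \<in> Xsp t0 tE. znonneg t0 tE (snd x)}.
        Fw t0 tE f c b tps \<omega> xw \<le> Fw t0 tE f c b tps \<omega> x"
      using xw_min by auto
    show "\<forall>x\<in>Xsp t0 tE. ereal (Fw t0 tE f c b tps \<omega> xt) + ereal \<tau> * Gamma t0 tE xt
        \<le> ereal (Fw t0 tE f c b tps \<omega> x) + ereal \<tau> * Gamma t0 tE x"
      using xt_min by (simp add: Fwt_def)
    show "Fw t0 tE f c b tps \<omega> (shift_z \<tau> xw)
        \<le> Fw t0 tE f c b tps \<omega> xw + \<tau> * ((Lf + B * Lc / \<omega>) * norm (One::'z) * (tE - t0))"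
      using assms(1,2) _ xw(1,2) well_def c_bound f_lip c_lip
      by (rule Fw_shift_z_le) (use assms(3) in simp)
    show "Gamma t0 tE (shift_z \<tau> xw) \<le> ereal (- real DIM('z) * ln \<tau> * (tE - t0))"
      using assms(1) xw assms(3) by (rule Gamma_shift_z_le)
    show "Gamma t0 tE xt \<noteq> \<infinity> \<Longrightarrow> xt \<in> {x \<in> Xsp t0 tE. znonneg t0 tE (snd x)}"
      using xt(1) Gamma_finite_imp_znonneg by blast
    show "Gamma t0 tE xt \<noteq> \<infinity> \<Longrightarrow> ereal (- real DIM('z) * Ct * (tE - t0)) \<le> Gamma t0 tE xt"
      using assms(1) _ xt(2) by (rule Gamma_lower_bound)
  qed (simp_all add: assms(3) shift_z_in_Xsp[OF xw(1)])
  then show ?thesis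
    by (simp add: algebra_simps)
qed

theorem mainTheorem11:
  fixes t0 tE \<omega> \<zeta> :: real
    and tps :: "real list"
    and f :: "'y::euclidean_space \<Rightarrow> 'y \<Rightarrow> 'z::euclidean_space \<Rightarrow> real \<Rightarrow> real"
    and c :: "'y \<Rightarrow> 'y \<Rightarrow> 'z \<Rightarrow> real \<Rightarrow> 'c::euclidean_space"
    and b :: "'y list \<Rightarrow> 'b::euclidean_space"
    and xs xw :: "(real \<Rightarrow> 'y) \<times> (real \<Rightarrow> 'z)"
    and xwt :: "real \<Rightarrow> (real \<Rightarrow> 'y) \<times> (real \<Rightarrow> 'z)"
  assumes interval: "t0 < tE"
    and tps_in: "set tps \<subseteq> {t0..tE}"
    and omega: "0 < \<omega>" "\<omega> < 1"
    and zeta: "0 < \<zeta>" "\<zeta> < 1"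
    \<comment> \<open>F and r are well defined (integrands integrable) on X\<close>
    and well_def: "\<forall>(y, z)\<in>Xsp t0 tE.
        integrable (Om t0 tE) (\<lambda>t. f (wdot t0 tE y t) (y t) (z t) t) \<and>
        integrable (Om t0 tE) (\<lambda>t. (norm (c (wdot t0 tE y t) (y t) (z t) t))\<^sup>2)"
    \<comment> \<open>(A.2)\<close>
    and A2_bound: "\<exists>B. \<forall>(y, z)\<in>Xsp t0 tE. znonneg t0 tE z \<longrightarrow>
        (\<forall>dy. weak_deriv t0 tE y dy \<longrightarrow> (\<forall>t\<in>{t0<..<tE}. (\<forall>j\<in>Basis. 0 \<le> z t \<bullet> j) \<longrightarrow>
             norm1 (c (dy t) (y t) (z t) t) \<le> B))
        \<and> norm1 (b (map y tps)) \<le> B"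
    and A2_below: "\<exists>B. \<forall>(y, z)\<in>Xsp t0 tE. znonneg t0 tE z \<longrightarrow> B \<le> Fobj t0 tE f (y, z)"
    \<comment> \<open>(A.3)\<close>
    and A3_f: "\<exists>L. \<forall>t\<in>{t0<..<tE}. \<forall>v v' w w' u u'.
        \<bar>f v w u t - f v' w' u' t\<bar> \<le> L * (norm (v - v') + norm (w - w') + norm (u - u'))"
    and A3_c: "\<exists>L. \<forall>t\<in>{t0<..<tE}. \<forall>v v' w w' u u'.
        norm (c v w u t - c v' w' u' t) \<le> L * (norm (v - v') + norm (w - w') + norm (u - u'))"
    and A3_b: "\<exists>L. \<forall>ys ys'. length ys = length tps \<longrightarrow> length ys' = length tps \<longrightarrow>
        norm (b ys - b ys') \<le> L * (\<Sum>i<length tps. norm (ys ! i - ys' ! i))"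
    \<comment> \<open>x* is a global minimizer of the DOP\<close>
    and xs_feas: "xs \<in> Xsp t0 tE" "znonneg t0 tE (snd xs)"
        "b (map (fst xs) tps) = 0"
        "AE t in Om t0 tE. c (wdot t0 tE (fst xs) t) (fst xs t) (snd xs t) t = 0"
    and xs_min: "\<forall>(y, z)\<in>Xsp t0 tE. znonneg t0 tE z \<longrightarrow> b (map y tps) = 0 \<longrightarrow>
        (AE t in Om t0 tE. c (wdot t0 tE y t) (y t) (z t) t = 0) \<longrightarrow>
        Fobj t0 tE f xs \<le> Fobj t0 tE f (y, z)"
    \<comment> \<open>x*_omega minimizes F_omega over {z \<ge> 0 a.e.}\<close>
    and xw_feas: "xw \<in> Xsp t0 tE" "znonneg t0 tE (snd xw)"
    and xw_min: "\<forall>(y, z)\<in>Xsp t0 tE. znonneg t0 tE z \<longrightarrow>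
        Fw t0 tE f c b tps \<omega> xw \<le> Fw t0 tE f c b tps \<omega> (y, z)"
    \<comment> \<open>x*_{omega,tau} minimizes F_{omega,tau} over X, for every tau in (0,omega]\<close>
    and xwt_feas: "\<forall>\<tau>\<in>{0<..\<omega>}. xwt \<tau> \<in> Xsp t0 tE"
    and xwt_min: "\<forall>\<tau>\<in>{0<..\<omega>}. \<forall>x\<in>Xsp t0 tE.
        Fwt t0 tE f c b tps \<omega> \<tau> (xwt \<tau>) \<le> Fwt t0 tE f c b tps \<omega> \<tau> x"
    \<comment> \<open>(A.4)\<close>
    and A4_w: "\<exists>C. (AE t in Om t0 tE. norm (snd xw t) \<le> C) \<and> normX t0 tE xw \<le> C"
    and A4_wt: "\<exists>C. \<forall>\<tau>\<in>{0<..\<omega>}.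
        (AE t in Om t0 tE. norm (snd (xwt \<tau>) t) \<le> C) \<and> normX t0 tE (xwt \<tau>) \<le> C"
    and A4_s: "\<exists>C. normX t0 tE xs \<le> C"
  shows "(\<lambda>\<tau>. \<bar>Fw t0 tE f c b tps \<omega> (xwt \<tau>) - Fw t0 tE f c b tps \<omega> xw\<bar>)
           \<in> O[at_right 0](\<lambda>\<tau>. \<tau> powr (1 - \<zeta>))"
proof -
  obtain Lf where f_lip:
      "\<forall>t\<in>{t0<..<tE}. \<forall>v w u u'. \<bar>f v w u' t - f v w u t\<bar> \<le> Lf * norm (u' - u)"
    using lipschitz_in_third_arg[where g = f, unfolded real_norm_def] A3_f by blast
  obtain Lc where c_lip:
      "\<forall>t\<in>{t0<..<tE}. \<forall>v w u u'. norm (c v w u' t - c v w u t) \<le> Lc * norm (u' - u)"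
    using lipschitz_in_third_arg[where g = c] A3_c by blast
  obtain B where "\<forall>(y, z)\<in>Xsp t0 tE. znonneg t0 tE z \<longrightarrow>
      (\<forall>dy. weak_deriv t0 tE y dy \<longrightarrow> (\<forall>t\<in>{t0<..<tE}. (\<forall>j\<in>Basis. 0 \<le> z t \<bullet> j) \<longrightarrow>
           norm1 (c (dy t) (y t) (z t) t) \<le> B))"
    using A2_bound by blast
  then have c_bound: "\<forall>(y, z)\<in>Xsp t0 tE. znonneg t0 tE z \<longrightarrow>
      (AE t in Om t0 tE. norm (c (wdot t0 tE y t) (y t) (z t) t) \<le> B)"
    using norm_c_AE_le by blast
  obtain Cw where Cw: "AE t in Om t0 tE. norm (snd xw t) \<le> Cw"
    using A4_w by blast
  obtain Cwt where Cwt: "\<forall>\<tau>\<in>{0<..\<omega>}. AE t in Om t0 tE. norm (snd (xwt \<tau>) t) \<le> Cwt"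
    using A4_wt by blast
  define K where "K = ((Lf + B * Lc / \<omega>) * norm (One::'z) + real DIM('z) * Cwt) * (tE - t0)"
  define M where "M = real DIM('z) * (tE - t0)"
  have "eventually (\<lambda>\<tau>. \<tau> \<in> {0<..\<omega>}) (at_right 0)"
    using omega(1) eventually_at_right_field by fastforce
  then have "eventually (\<lambda>\<tau>. norm \<bar>Fw t0 tE f c b tps \<omega> (xwt \<tau>) - Fw t0 tE f c b tps \<omega> xw\<bar>
      \<le> norm (K * \<tau> - M * (\<tau> * ln \<tau>))) (at_right 0)"
  proof eventually_elim
    case (elim \<tau>)
    have "\<bar>Fw t0 tE f c b tps \<omega> (xwt \<tau>) - Fw t0 tE f c b tps \<omega> xw\<bar> \<le> K * \<tau> - M * (\<tau> * ln \<tau>)"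
      unfolding K_def M_def
      using _ omega(1) _ well_def c_bound f_lip c_lip xw_feas Cw xw_min
      by (rule Fw_barrier_gap_le) (use interval elim xwt_feas Cwt xwt_min in auto)
    then show ?case by simp
  qed
  then have "(\<lambda>\<tau>. \<bar>Fw t0 tE f c b tps \<omega> (xwt \<tau>) - Fw t0 tE f c b tps \<omega> xw\<bar>)
      \<in> O[at_right 0](\<lambda>\<tau>. K * \<tau> - M * (\<tau> * ln \<tau>))"
    by (rule landau_o.big_mono)
  also have "(\<lambda>\<tau>. K * \<tau> - M * (\<tau> * ln \<tau>)) \<in> O[at_right 0](\<lambda>\<tau>. \<tau> powr (1 - \<zeta>))"
    using zeta by real_asymp
  finally show ?thesis .
qed

end
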